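(* Deciding whether a normal finitely recursive program $P$ skeptically entails a ground formula $F$ is r.e.-hard.
   Context: A normal program is a finite set of rules $A\leftarrow L_1,\dots,L_n$ ($n\ge0$), $A$ an atom, $L_i$ atoms or negated atoms $\mathtt{not}\,B$, possibly with function symbols. $\mathsf{Ground}(P)$ is its ground instantiation. For a set $M$ of ground atoms, $P^M$ is obtained from $\mathsf{Ground}(P)$ by deleting rules having some $\mathtt{not}\,B$ in the body with $B\in M$ and deleting negative literals from the remaining rules; $M$ is a stable model iff $M$ is the least Herbrand model of $P^M$. A ground formula is a closed propositional combination of ground atoms; $P$ skeptically entails $F$ iff $F$ is true in every stable model of $P$. The dependency graph has ground atoms as vertices and an edge $A\to B$ whenever some $r\in\mathsf{Ground}(P)$ has head $A$ and $B$ occurring in its body; $A$ depends on $B$ if there is a directed path from $A$ to $B$ (every atom depends on itself). $P$ is finitely recursive iff each ground atom depends on finitely many ground atoms. r.e.-hard means every recursively enumerable set is many-one reducible to the set of pairs $(P,F)$ with $P$ normal finitely recursive skeptically entailing $F$. *)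

theory Defs
  imports Main "HOL-Library.Nat_Bijection"
begin

datatype recf = Zero | Succ | Proj nat | Comp recf "recf list" | Prim recf recf | Mn recf

inductive eval :: "recf \<Rightarrow> nat list \<Rightarrow> nat \<Rightarrow> bool" where
  eval_Zero: "eval Zero xs 0"
| eval_Succ: "eval Succ (x # xs) (Suc x)"
| eval_Proj: "i < length xs \<Longrightarrow> eval (Proj i) xs (xs ! i)"
| eval_Comp: "list_all2 (\<lambda>g y. eval g xs y) gs ys \<Longrightarrow> eval f ys z \<Longrightarrow> eval (Comp f gs) xs z"
| eval_Prim0: "eval f xs y \<Longrightarrow> eval (Prim f g) (0 # xs) y"
| eval_PrimS: "eval (Prim f g) (n # xs) y \<Longrightarrow> eval g (n # y # xs) z \<Longrightarrow> eval (Prim f g) (Suc n # xs) z"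
| eval_Mn: "eval f (y # xs) 0 \<Longrightarrow> (\<forall>z<y. \<exists>v. eval f (z # xs) v \<and> 0 < v) \<Longrightarrow> eval (Mn f) xs y"

definition computable :: "(nat \<Rightarrow> nat) \<Rightarrow> bool" where
  "computable f \<longleftrightarrow> (\<exists>r. \<forall>x. eval r [x] (f x))"

definition rec_enum :: "nat set \<Rightarrow> bool" where
  "rec_enum A \<longleftrightarrow> (\<exists>r. \<forall>x. x \<in> A \<longleftrightarrow> (\<exists>y. eval r [x] y))"

datatype "term" = Var nat | Fn nat "term list"

datatype atom = Atom nat "term list"

datatype lit = Pos atom | Neg atom

datatype rule = Rule atom "lit list"

type_synonym program = "rule list"

datatype fmla = FAtom atom | FTrue | FFalse | FNot fmla | FAnd fmla fmla | FOr fmla fmla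
  | FImp fmla fmla | FIff fmla fmla

fun head :: "rule \<Rightarrow> atom" where "head (Rule h b) = h"
fun body :: "rule \<Rightarrow> lit list" where "body (Rule h b) = b"
fun lit_atom :: "lit \<Rightarrow> atom" where "lit_atom (Pos a) = a" | "lit_atom (Neg a) = a"

fun term_funs :: "term \<Rightarrow> (nat \<times> nat) set" where
  "term_funs (Var x) = {}"
| "term_funs (Fn f ts) = insert (f, length ts) (\<Union>t\<in>set ts. term_funs t)"

fun atom_funs :: "atom \<Rightarrow> (nat \<times> nat) set" where
  "atom_funs (Atom p ts) = (\<Union>t\<in>set ts. term_funs t)"

fun rule_funs :: "rule \<Rightarrow> (nat \<times> nat) set" where
  "rule_funs (Rule h b) = atom_funs h \<union> (\<Union>l\<in>set b. atom_funs (lit_atom l))"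

text \<open>Function symbols (with arities) of the language of P; as usual, if P contains no
  constant an arbitrary constant (symbol 0) is added.\<close>
definition signature :: "program \<Rightarrow> (nat \<times> nat) set" where
  "signature P = (let S = (\<Union>r\<in>set P. rule_funs r) in
     if (\<exists>c. (c, 0) \<in> S) then S else insert (0, 0) S)"

inductive_set herbrand_universe :: "program \<Rightarrow> term set" for P where
  "(f, length ts) \<in> signature P \<Longrightarrow> (\<forall>t\<in>set ts. t \<in> herbrand_universe P)
     \<Longrightarrow> Fn f ts \<in> herbrand_universe P"

fun subst_term :: "(nat \<Rightarrow> term) \<Rightarrow> term \<Rightarrow> term" where
  "subst_term \<sigma> (Var x) = \<sigma> x"
| "subst_term \<sigma> (Fn f ts) = Fn f (map (subst_term \<sigma>) ts)"

fun subst_atom :: "(nat \<Rightarrow> term) \<Rightarrow> atom \<Rightarrow> atom" where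
  "subst_atom \<sigma> (Atom p ts) = Atom p (map (subst_term \<sigma>) ts)"

fun subst_lit :: "(nat \<Rightarrow> term) \<Rightarrow> lit \<Rightarrow> lit" where
  "subst_lit \<sigma> (Pos a) = Pos (subst_atom \<sigma> a)"
| "subst_lit \<sigma> (Neg a) = Neg (subst_atom \<sigma> a)"

fun subst_rule :: "(nat \<Rightarrow> term) \<Rightarrow> rule \<Rightarrow> rule" where
  "subst_rule \<sigma> (Rule h b) = Rule (subst_atom \<sigma> h) (map (subst_lit \<sigma>) b)"

definition Ground :: "program \<Rightarrow> rule set" where
  "Ground P = {subst_rule \<sigma> r | \<sigma> r. r \<in> set P \<and> (\<forall>x. \<sigma> x \<in> herbrand_universe P)}"

fun ground_term :: "term \<Rightarrow> bool" where
  "ground_term (Var x) = False"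
| "ground_term (Fn f ts) = (\<forall>t\<in>set ts. ground_term t)"

fun ground_atom :: "atom \<Rightarrow> bool" where
  "ground_atom (Atom p ts) = (\<forall>t\<in>set ts. ground_term t)"

text \<open>Gelfond-Lifschitz reduct P^M: a set of definite ground rules (head, positive body).\<close>
definition reduct :: "program \<Rightarrow> atom set \<Rightarrow> (atom \<times> atom list) set" where
  "reduct P M = {(h, [a. Pos a \<leftarrow> b]) | h b. Rule h b \<in> Ground P \<and> (\<forall>a. Neg a \<in> set b \<longrightarrow> a \<notin> M)}"

inductive_set least_model :: "(atom \<times> atom list) set \<Rightarrow> atom set" for R where
  "(h, bs) \<in> R \<Longrightarrow> (\<forall>b\<in>set bs. b \<in> least_model R) \<Longrightarrow> h \<in> least_model R"

definition stable_model :: "program \<Rightarrow> atom set \<Rightarrow> bool" where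
  "stable_model P M \<longleftrightarrow> (\<forall>a\<in>M. ground_atom a) \<and> M = least_model (reduct P M)"

fun fmla_atoms :: "fmla \<Rightarrow> atom set" where
  "fmla_atoms (FAtom a) = {a}"
| "fmla_atoms FTrue = {}"
| "fmla_atoms FFalse = {}"
| "fmla_atoms (FNot F) = fmla_atoms F"
| "fmla_atoms (FAnd F G) = fmla_atoms F \<union> fmla_atoms G"
| "fmla_atoms (FOr F G) = fmla_atoms F \<union> fmla_atoms G"
| "fmla_atoms (FImp F G) = fmla_atoms F \<union> fmla_atoms G"
| "fmla_atoms (FIff F G) = fmla_atoms F \<union> fmla_atoms G"

definition ground_fmla :: "fmla \<Rightarrow> bool" where
  "ground_fmla F \<longleftrightarrow> (\<forall>a\<in>fmla_atoms F. ground_atom a)"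

fun holds :: "atom set \<Rightarrow> fmla \<Rightarrow> bool" where
  "holds M (FAtom a) = (a \<in> M)"
| "holds M FTrue = True"
| "holds M FFalse = False"
| "holds M (FNot F) = (\<not> holds M F)"
| "holds M (FAnd F G) = (holds M F \<and> holds M G)"
| "holds M (FOr F G) = (holds M F \<or> holds M G)"
| "holds M (FImp F G) = (holds M F \<longrightarrow> holds M G)"
| "holds M (FIff F G) = (holds M F \<longleftrightarrow> holds M G)"

definition skeptically_entails :: "program \<Rightarrow> fmla \<Rightarrow> bool" where
  "skeptically_entails P F \<longleftrightarrow> (\<forall>M. stable_model P M \<longrightarrow> holds M F)"

definition dep_edges :: "program \<Rightarrow> (atom \<times> atom) set" where
  "dep_edges P = {(head r, lit_atom l) | r l. r \<in> Ground P \<and> l \<in> set (body r)}"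

definition finitely_recursive :: "program \<Rightarrow> bool" where
  "finitely_recursive P \<longleftrightarrow> (\<forall>A. ground_atom A \<longrightarrow> finite {B. (A, B) \<in> (dep_edges P)\<^sup>*})"

fun enc_term :: "term \<Rightarrow> nat" where
  "enc_term (Var x) = prod_encode (0, x)"
| "enc_term (Fn f ts) = prod_encode (1, prod_encode (f, list_encode (map enc_term ts)))"

fun enc_atom :: "atom \<Rightarrow> nat" where
  "enc_atom (Atom p ts) = prod_encode (p, list_encode (map enc_term ts))"

fun enc_lit :: "lit \<Rightarrow> nat" where
  "enc_lit (Pos a) = prod_encode (0, enc_atom a)"
| "enc_lit (Neg a) = prod_encode (1, enc_atom a)"

fun enc_rule :: "rule \<Rightarrow> nat" where
  "enc_rule (Rule h b) = prod_encode (enc_atom h, list_encode (map enc_lit b))"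

definition enc_program :: "program \<Rightarrow> nat" where
  "enc_program P = list_encode (map enc_rule P)"

fun enc_fmla :: "fmla \<Rightarrow> nat" where
  "enc_fmla (FAtom a) = prod_encode (0, enc_atom a)"
| "enc_fmla FTrue = prod_encode (1, 0)"
| "enc_fmla FFalse = prod_encode (2, 0)"
| "enc_fmla (FNot F) = prod_encode (3, enc_fmla F)"
| "enc_fmla (FAnd F G) = prod_encode (4, prod_encode (enc_fmla F, enc_fmla G))"
| "enc_fmla (FOr F G) = prod_encode (5, prod_encode (enc_fmla F, enc_fmla G))"
| "enc_fmla (FImp F G) = prod_encode (6, prod_encode (enc_fmla F, enc_fmla G))"
| "enc_fmla (FIff F G) = prod_encode (7, prod_encode (enc_fmla F, enc_fmla G))"

definition enc_instance :: "program \<times> fmla \<Rightarrow> nat" where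
  "enc_instance PF = prod_encode (enc_program (fst PF), enc_fmla (snd PF))"

definition SkepFR :: "(program \<times> fmla) set" where
  "SkepFR = {(P, F). finitely_recursive P \<and> ground_fmla F \<and> skeptically_entails P F}"

definition many_one_reducible :: "nat set \<Rightarrow> (program \<times> fmla) set \<Rightarrow> bool" where
  "many_one_reducible A B \<longleftrightarrow>
     (\<exists>f. computable (enc_instance \<circ> f) \<and> (\<forall>x. x \<in> A \<longleftrightarrow> f x \<in> B))"

end

theory Submission
  imports Defs
begin

(*
  Reduction from the halting problem.  For a partial recursive function r and an input x, the
  program halting_program r x consists of a definite interpreter for Kleene's partial recursive
  functions, the fact input(x), and the single rule  H <- input(X), eval(r, [X], Y, W), not H
  with H = halt(r, [X], Y, W).  A rule of this shape derives nothing but kills every stable model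
  satisfying its positive body, so the program has a stable model (the least model of its definite
  part) iff no halt atom is derivable, i.e. iff r diverges on x.  Hence the program skeptically
  entails false iff x is in the domain of r.  The interpreter is written so that every argument of
  a body atom is a subterm of an argument of the head, which makes the program finitely recursive.
*)

fun pred_of :: "atom \<Rightarrow> nat" where "pred_of (Atom p ts) = p"
fun args :: "atom \<Rightarrow> term list" where "args (Atom p ts) = ts"

lemma pred_of_subst_atom [simp]: "pred_of (subst_atom \<sigma> a) = pred_of a"
  by (cases a) auto

lemma args_subst_atom [simp]: "args (subst_atom \<sigma> a) = map (subst_term \<sigma>) (args a)"
  by (cases a) auto

lemma lit_atom_subst_lit [simp]: "lit_atom (subst_lit \<sigma> l) = subst_atom \<sigma> (lit_atom l)"
  by (cases l) auto

lemma subst_rule_eq: "subst_rule \<sigma> ru = Rule (subst_atom \<sigma> (head ru)) (map (subst_lit \<sigma>) (body ru))"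
  by (cases ru) auto

lemma subst_lit_eq_Neg: "Neg a = subst_lit \<sigma> l \<longleftrightarrow> (\<exists>a'. l = Neg a' \<and> a = subst_atom \<sigma> a')"
  by (cases l) auto

lemma subst_lit_eq_Pos: "Pos a = subst_lit \<sigma> l \<longleftrightarrow> (\<exists>a'. l = Pos a' \<and> a = subst_atom \<sigma> a')"
  by (cases l) auto

lemma Neg_in_subst_lits:
  "Neg a \<in> set (map (subst_lit \<sigma>) ls) \<longleftrightarrow> (\<exists>a'. Neg a' \<in> set ls \<and> a = subst_atom \<sigma> a')"
  by (auto simp: image_iff subst_lit_eq_Neg)

lemma Pos_in_subst_lits:
  "Pos a \<in> set (map (subst_lit \<sigma>) ls) \<longleftrightarrow> (\<exists>a'. Pos a' \<in> set ls \<and> a = subst_atom \<sigma> a')"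
  by (auto simp: image_iff subst_lit_eq_Pos)

lemma set_positive_atoms: "set [a. Pos a \<leftarrow> ls] = {a. Pos a \<in> set ls}"
  by (induction ls) (auto split: lit.splits)

lemma subst_rule_in_Ground:
  "ru \<in> set P \<Longrightarrow> \<forall>v. \<sigma> v \<in> herbrand_universe P \<Longrightarrow> subst_rule \<sigma> ru \<in> Ground P"
  unfolding Ground_def by blast

lemma signature_if_rule_funs: "ru \<in> set P \<Longrightarrow> fn \<in> rule_funs ru \<Longrightarrow> fn \<in> signature P"
  unfolding signature_def Let_def by auto

lemma herbrand_universe_Fn_iff:
  "Fn f ts \<in> herbrand_universe P \<longleftrightarrow> (f, length ts) \<in> signature P \<and> (\<forall>t\<in>set ts. t \<in> herbrand_universe P)"
  by (auto elim: herbrand_universe.cases intro: herbrand_universe.intros)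

lemma term_funs_subset_rule_funs: "t \<in> set (args (head ru)) \<Longrightarrow> term_funs t \<subseteq> rule_funs ru"
proof (cases ru)
  case (Rule h b)
  then show "t \<in> set (args (head ru)) \<Longrightarrow> term_funs t \<subseteq> rule_funs ru"
    by (cases h) auto
qed

lemma subst_term_in_herbrand_universe:
  "\<forall>v. \<sigma> v \<in> herbrand_universe P \<Longrightarrow> term_funs t \<subseteq> signature P
    \<Longrightarrow> subst_term \<sigma> t \<in> herbrand_universe P"
  by (induction t) (auto intro!: herbrand_universe.intros simp: UN_subset_iff)

lemma ground_term_if_in_herbrand_universe: "t \<in> herbrand_universe P \<Longrightarrow> ground_term t"
  by (induction rule: herbrand_universe.induct) auto

lemma ground_subst_term: "\<forall>v. ground_term (\<sigma> v) \<Longrightarrow> ground_term (subst_term \<sigma> t)"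
  by (induction t) auto

lemma ground_subst_atom: "\<forall>v. ground_term (\<sigma> v) \<Longrightarrow> ground_atom (subst_atom \<sigma> a)"
  by (cases a) (auto intro: ground_subst_term)

lemma reduct_cases:
  assumes "(h, bs) \<in> reduct P M"
  obtains \<sigma> ru where "ru \<in> set P" "\<forall>v. \<sigma> v \<in> herbrand_universe P" "h = subst_atom \<sigma> (head ru)"
    "\<forall>b. Neg b \<in> set (body ru) \<longrightarrow> subst_atom \<sigma> b \<notin> M"
    "set bs = subst_atom \<sigma> ` {b. Pos b \<in> set (body ru)}"
proof -
  obtain b where b: "bs = [a. Pos a \<leftarrow> b]" "Rule h b \<in> Ground P" "\<forall>c. Neg c \<in> set b \<longrightarrow> c \<notin> M"
    using assms unfolding reduct_def by blast
  then obtain \<sigma> ru where ru: "ru \<in> set P" "\<forall>v. \<sigma> v \<in> herbrand_universe P"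
    "Rule h b = subst_rule \<sigma> ru"
    unfolding Ground_def by blast
  then have h: "h = subst_atom \<sigma> (head ru)" and b_eq: "b = map (subst_lit \<sigma>) (body ru)"
    by (simp_all add: subst_rule_eq)
  have "\<forall>c. Neg c \<in> set (body ru) \<longrightarrow> subst_atom \<sigma> c \<notin> M"
    using b(3) unfolding b_eq by (metis Neg_in_subst_lits)
  moreover have "set bs = subst_atom \<sigma> ` {b. Pos b \<in> set (body ru)}"
    unfolding b(1) b_eq set_positive_atoms by (auto simp only: Pos_in_subst_lits mem_Collect_eq image_iff)
  ultimately show ?thesis
    using that ru(1,2) h by blast
qed

lemma least_model_reduct_cases:
  assumes "a \<in> least_model (reduct P M)"
  obtains \<sigma> ru where "ru \<in> set P" "\<forall>v. \<sigma> v \<in> herbrand_universe P" "a = subst_atom \<sigma> (head ru)"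
    "\<forall>b. Neg b \<in> set (body ru) \<longrightarrow> subst_atom \<sigma> b \<notin> M"
  using assms by (cases rule: least_model.cases) (erule reduct_cases, blast)

lemma least_model_reduct_induct [consumes 1, case_names rule]:
  assumes "a \<in> least_model (reduct P M)"
    and "\<And>\<sigma> ru. ru \<in> set P \<Longrightarrow> \<forall>v. \<sigma> v \<in> herbrand_universe P
      \<Longrightarrow> (\<And>b. Pos b \<in> set (body ru) \<Longrightarrow> Q (subst_atom \<sigma> b)) \<Longrightarrow> Q (subst_atom \<sigma> (head ru))"
  shows "Q a"
  using assms(1)
proof (induction rule: least_model.induct)
  case (1 h bs)
  obtain \<sigma> ru where ru: "ru \<in> set P" "\<forall>v. \<sigma> v \<in> herbrand_universe P" "h = subst_atom \<sigma> (head ru)"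
    "set bs = subst_atom \<sigma> ` {b. Pos b \<in> set (body ru)}"
    using reduct_cases[OF 1(1)] by metis
  have "Q (subst_atom \<sigma> b)" if "Pos b \<in> set (body ru)" for b
    using 1(2) ru(4) that by auto
  then show ?case
    using assms(2)[OF ru(1,2)] ru(3) by blast
qed

lemma subst_head_in_least_model:
  assumes "ru \<in> set P" "\<forall>v. \<sigma> v \<in> herbrand_universe P"
    "\<forall>b. Neg b \<in> set (body ru) \<longrightarrow> subst_atom \<sigma> b \<notin> M"
    "\<forall>b. Pos b \<in> set (body ru) \<longrightarrow> subst_atom \<sigma> b \<in> least_model (reduct P M)"
  shows "subst_atom \<sigma> (head ru) \<in> least_model (reduct P M)"
proof (rule least_model.intros)
  have "Rule (subst_atom \<sigma> (head ru)) (map (subst_lit \<sigma>) (body ru)) \<in> Ground P"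
    using subst_rule_in_Ground[OF assms(1,2)] by (simp only: subst_rule_eq)
  moreover have "\<forall>a. Neg a \<in> set (map (subst_lit \<sigma>) (body ru)) \<longrightarrow> a \<notin> M"
    using assms(3) by (metis Neg_in_subst_lits)
  ultimately show "(subst_atom \<sigma> (head ru), [a. Pos a \<leftarrow> map (subst_lit \<sigma>) (body ru)]) \<in> reduct P M"
    unfolding reduct_def by blast
  show "\<forall>b\<in>set [a. Pos a \<leftarrow> map (subst_lit \<sigma>) (body ru)]. b \<in> least_model (reduct P M)"
    using assms(4) unfolding set_positive_atoms by (auto simp only: Pos_in_subst_lits mem_Collect_eq)
qed

lemma least_model_reduct_ground: "a \<in> least_model (reduct P M) \<Longrightarrow> ground_atom a"
  by (erule least_model_reduct_cases)
    (auto intro!: ground_subst_atom ground_term_if_in_herbrand_universe)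

lemma args_in_herbrand_universe:
  assumes "a \<in> least_model (reduct P M)" "t \<in> set (args a)"
  shows "t \<in> herbrand_universe P"
  using assms(1)
proof (cases rule: least_model_reduct_cases)
  case (1 \<sigma> ru)
  then obtain t0 where t0: "t0 \<in> set (args (head ru))" "t = subst_term \<sigma> t0"
    using assms(2) by auto
  have "term_funs t0 \<subseteq> signature P"
    using term_funs_subset_rule_funs[OF t0(1)] signature_if_rule_funs[OF 1(1)] by blast
  then show ?thesis
    using 1(2) t0(2) subst_term_in_herbrand_universe by blast
qed

section \<open>Programs whose only negation is a self-denial\<close>

definition denial_program :: "nat \<Rightarrow> program \<Rightarrow> bool" where
  "denial_program p P \<longleftrightarrow>
     (\<forall>ru\<in>set P. \<forall>a. Neg a \<in> set (body ru) \<longleftrightarrow> pred_of (head ru) = p \<and> a = head ru)"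

lemma Neg_in_Ground_denial_program:
  assumes "denial_program p P" "Rule h b \<in> Ground P"
  shows "Neg a \<in> set b \<longleftrightarrow> pred_of h = p \<and> a = h"
proof -
  obtain \<sigma> ru where ru: "ru \<in> set P" "Rule h b = subst_rule \<sigma> ru"
    using assms(2) unfolding Ground_def by blast
  then have hb: "h = subst_atom \<sigma> (head ru)" "b = map (subst_lit \<sigma>) (body ru)"
    by (simp_all add: subst_rule_eq)
  have "\<forall>a. Neg a \<in> set (body ru) \<longleftrightarrow> pred_of (head ru) = p \<and> a = head ru"
    using assms(1) ru(1) unfolding denial_program_def by blast
  then show ?thesis
    by (simp only: hb Neg_in_subst_lits) auto
qed

lemma reduct_denial_program:
  assumes "denial_program p P" "\<forall>a\<in>M. pred_of a \<noteq> p"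
  shows "reduct P M = reduct P {}"
proof -
  have "a \<notin> M" if "Rule h b \<in> Ground P" "Neg a \<in> set b" for h b a
    using Neg_in_Ground_denial_program[OF assms(1) that(1), of a] that(2) assms(2) by auto
  then show ?thesis
    unfolding reduct_def by (intro Collect_cong) blast
qed

lemma least_model_reduct_denial_program_disjoint:
  assumes "denial_program p P" "a \<in> least_model (reduct P M)" "pred_of a = p"
  shows "a \<notin> M"
  using assms(2)
proof (cases rule: least_model_reduct_cases)
  case (1 \<sigma> ru)
  then have "Neg (head ru) \<in> set (body ru)"
    using assms(1,3) unfolding denial_program_def by simp
  then show ?thesis
    using 1(3,4) by blast
qed

lemma stable_model_denial_program_iff:
  assumes "denial_program p P"
  shows "stable_model P M \<longleftrightarrow> M = least_model (reduct P {}) \<and> (\<forall>a\<in>M. pred_of a \<noteq> p)"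
proof
  assume "stable_model P M"
  then have M: "M = least_model (reduct P M)"
    unfolding stable_model_def by blast
  then have "\<forall>a\<in>M. pred_of a \<noteq> p"
    using least_model_reduct_denial_program_disjoint[OF assms] by blast
  with M show "M = least_model (reduct P {}) \<and> (\<forall>a\<in>M. pred_of a \<noteq> p)"
    using reduct_denial_program[OF assms] by metis
next
  assume "M = least_model (reduct P {}) \<and> (\<forall>a\<in>M. pred_of a \<noteq> p)"
  then show "stable_model P M"
    unfolding stable_model_def
    using reduct_denial_program[OF assms] least_model_reduct_ground by metis
qed

lemma skeptically_entails_FFalse_denial_program:
  "denial_program p P \<Longrightarrow>
    skeptically_entails P FFalse \<longleftrightarrow> (\<exists>a\<in>least_model (reduct P {}). pred_of a = p)"
  unfolding skeptically_entails_def by (auto simp: stable_model_denial_program_iff)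

section \<open>A syntactic criterion for finite recursiveness\<close>

fun subterms :: "term \<Rightarrow> term set" where
  "subterms (Var v) = {Var v}"
| "subterms (Fn f ts) = insert (Fn f ts) (\<Union>t\<in>set ts. subterms t)"

lemma finite_subterms: "finite (subterms t)"
  by (induction t) auto

lemma subterms_refl: "t \<in> subterms t"
  by (cases t) auto

lemma subterms_trans: "u \<in> subterms t \<Longrightarrow> subterms u \<subseteq> subterms t"
  by (induction t) auto

lemma subst_term_subterms: "u \<in> subterms t \<Longrightarrow> subst_term \<sigma> u \<in> subterms (subst_term \<sigma> t)"
  by (induction t) (auto simp: subterms_refl)

definition body_args_subterms_of_head :: "program \<Rightarrow> bool" where
  "body_args_subterms_of_head P \<longleftrightarrow> (\<forall>ru\<in>set P. \<forall>l\<in>set (body ru).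
     \<forall>u\<in>set (args (lit_atom l)). \<exists>t\<in>set (args (head ru)). u \<in> subterms t)"

definition body_shapes :: "program \<Rightarrow> (nat \<times> nat) set" where
  "body_shapes P = {(pred_of (lit_atom l), length (args (lit_atom l))) | ru l. ru \<in> set P \<and> l \<in> set (body ru)}"

lemma finite_body_shapes: "finite (body_shapes P)"
proof -
  have "body_shapes P = (\<Union>ru\<in>set P. (\<lambda>l. (pred_of (lit_atom l), length (args (lit_atom l)))) ` set (body ru))"
    unfolding body_shapes_def by blast
  then show ?thesis by simp
qed

lemma dep_edges_subterms:
  assumes "body_args_subterms_of_head P" "(A, B) \<in> dep_edges P"
  shows "\<forall>u\<in>set (args B). \<exists>t\<in>set (args A). u \<in> subterms t"
    and "(pred_of B, length (args B)) \<in> body_shapes P"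
proof -
  obtain rg l' where e: "A = head rg" "B = lit_atom l'" "rg \<in> Ground P" "l' \<in> set (body rg)"
    using assms(2) unfolding dep_edges_def by blast
  then obtain \<sigma> ru where ru: "ru \<in> set P" "rg = subst_rule \<sigma> ru"
    unfolding Ground_def by blast
  then have A: "A = subst_atom \<sigma> (head ru)" and "body rg = map (subst_lit \<sigma>) (body ru)"
    using e(1) by (simp_all add: subst_rule_eq)
  then obtain l where l: "l \<in> set (body ru)" "B = subst_atom \<sigma> (lit_atom l)"
    using e(2,4) by auto
  show "\<forall>u\<in>set (args B). \<exists>t\<in>set (args A). u \<in> subterms t"
  proof
    fix u assume "u \<in> set (args B)"
    then obtain u0 where u0: "u0 \<in> set (args (lit_atom l))" "u = subst_term \<sigma> u0"
      using l(2) by auto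
    then obtain t0 where "t0 \<in> set (args (head ru))" "u0 \<in> subterms t0"
      using assms(1) ru(1) l(1) unfolding body_args_subterms_of_head_def by blast
    then show "\<exists>t\<in>set (args A). u \<in> subterms t"
      using A u0(2) subst_term_subterms by auto
  qed
  have "(pred_of B, length (args B)) = (pred_of (lit_atom l), length (args (lit_atom l)))"
    using l(2) by simp
  then show "(pred_of B, length (args B)) \<in> body_shapes P"
    using ru(1) l(1) unfolding body_shapes_def by blast
qed

lemma args_reachable_subterms:
  assumes "body_args_subterms_of_head P" "(A, B) \<in> (dep_edges P)\<^sup>*"
  shows "set (args B) \<subseteq> (\<Union>t\<in>set (args A). subterms t)"
  using assms(2)
proof (induction rule: rtrancl_induct)
  case base
  then show ?case using subterms_refl by blast
next
  case (step B B')
  show ?case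
  proof
    fix u assume "u \<in> set (args B')"
    then obtain t where t: "t \<in> set (args B)" "u \<in> subterms t"
      using dep_edges_subterms(1)[OF assms(1) step(2)] by blast
    then obtain t0 where t0: "t0 \<in> set (args A)" "t \<in> subterms t0"
      using step(3) by blast
    then have "u \<in> subterms t0"
      using t(2) subterms_trans by blast
    with t0(1) show "u \<in> (\<Union>t\<in>set (args A). subterms t)"
      by blast
  qed
qed

lemma finite_atoms_of_shapes:
  assumes "finite S" "finite K"
  shows "finite {B. set (args B) \<subseteq> S \<and> (pred_of B, length (args B)) \<in> K}"
proof (rule finite_subset)
  show "{B. set (args B) \<subseteq> S \<and> (pred_of B, length (args B)) \<in> K}
    \<subseteq> (\<lambda>(p, ts). Atom p ts) ` (\<Union>(p, k)\<in>K. {p} \<times> {ts. set ts \<subseteq> S \<and> length ts = k})"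
  proof
    fix B assume "B \<in> {B. set (args B) \<subseteq> S \<and> (pred_of B, length (args B)) \<in> K}"
    then show "B \<in> (\<lambda>(p, ts). Atom p ts) ` (\<Union>(p, k)\<in>K. {p} \<times> {ts. set ts \<subseteq> S \<and> length ts = k})"
      by (cases B) (force intro!: image_eqI)
  qed
  show "finite ((\<lambda>(p, ts). Atom p ts) ` (\<Union>(p, k)\<in>K. {p} \<times> {ts. set ts \<subseteq> S \<and> length ts = k}))"
    using assms by (auto intro!: finite_imageI finite_lists_length_eq)
qed

lemma finitely_recursive_if_body_args_subterms_of_head:
  assumes "body_args_subterms_of_head P"
  shows "finitely_recursive P"
  unfolding finitely_recursive_def
proof (intro allI impI)
  fix A :: atom
  let ?S = "\<Union>t\<in>set (args A). subterms t"
  let ?C = "{B. set (args B) \<subseteq> ?S \<and> (pred_of B, length (args B)) \<in> body_shapes P}"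
  have "{B. (A, B) \<in> (dep_edges P)\<^sup>*} \<subseteq> insert A ?C"
  proof
    fix B assume "B \<in> {B. (A, B) \<in> (dep_edges P)\<^sup>*}"
    then have reach: "(A, B) \<in> (dep_edges P)\<^sup>*" by simp
    then show "B \<in> insert A ?C"
    proof (cases rule: rtranclE)
      case base
      then show ?thesis by simp
    next
      case (step C)
      then have "(pred_of B, length (args B)) \<in> body_shapes P"
        using dep_edges_subterms(2)[OF assms] by blast
      with args_reachable_subterms[OF assms reach] show ?thesis
        by blast
    qed
  qed
  moreover have "finite (insert A ?C)"
    using finite_atoms_of_shapes[OF _ finite_body_shapes] by (simp add: finite_subterms)
  ultimately show "finite {B. (A, B) \<in> (dep_edges P)\<^sup>*}"
    by (rule finite_subset)
qed

fun const_recf :: "nat \<Rightarrow> recf" where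
  "const_recf 0 = Zero"
| "const_recf (Suc k) = Comp Succ [const_recf k]"

lemma eval_Comp_single: "eval g xs a \<Longrightarrow> eval f [a] b \<Longrightarrow> eval (Comp f [g]) xs b"
  by (rule eval_Comp[where ys = "[a]"]) auto

lemma eval_Comp_Succ: "eval f xs a \<Longrightarrow> eval (Comp Succ [f]) xs (Suc a)"
  by (rule eval_Comp_single) (auto intro: eval_Succ)

lemma eval_Proj_nth: "i < length xs \<Longrightarrow> xs ! i = y \<Longrightarrow> eval (Proj i) xs y"
  using eval_Proj by blast

lemma eval_const_recf: "eval (const_recf k) xs k"
  by (induction k) (auto intro: eval_Zero eval_Comp_Succ)

definition add_recf :: recf where
  "add_recf = Prim (Proj 0) (Comp Succ [Proj 1])"

lemma eval_add_recf: "eval add_recf [a, b] (a + b)"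
proof (induction a)
  case 0
  show ?case unfolding add_recf_def by (rule eval_Prim0, rule eval_Proj_nth) simp_all
next
  case (Suc a)
  have "eval (Comp Succ [Proj 1]) [a, a + b, b] (Suc (a + b))"
    by (rule eval_Comp_Succ, rule eval_Proj_nth) simp_all
  with Suc show ?case unfolding add_recf_def by (auto intro: eval_PrimS)
qed

lemma eval_Comp_add_recf: "eval f xs a \<Longrightarrow> eval g xs b \<Longrightarrow> eval (Comp add_recf [f, g]) xs (a + b)"
  by (rule eval_Comp[where ys = "[a, b]"]) (auto intro: eval_add_recf)

definition triangle_recf :: recf where
  "triangle_recf = Prim Zero (Comp Succ [Comp add_recf [Proj 1, Proj 0]])"

lemma eval_triangle_recf: "eval triangle_recf [n] (triangle n)"
proof (induction n)
  case 0
  show ?case unfolding triangle_recf_def by (auto intro: eval_Prim0 eval_Zero)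
next
  case (Suc n)
  have "eval (Comp Succ [Comp add_recf [Proj 1, Proj 0]]) [n, triangle n] (Suc (triangle n + n))"
    by (intro eval_Comp_Succ eval_Comp_add_recf; rule eval_Proj_nth) simp_all
  with Suc show ?case unfolding triangle_recf_def by (auto intro: eval_PrimS)
qed

definition pair_recf :: "recf \<Rightarrow> recf \<Rightarrow> recf" where
  "pair_recf f g = Comp add_recf [Comp triangle_recf [Comp add_recf [f, g]], f]"

lemma eval_pair_recf: "eval f xs a \<Longrightarrow> eval g xs b \<Longrightarrow> eval (pair_recf f g) xs (prod_encode (a, b))"
  unfolding pair_recf_def prod_encode_def
  by (auto intro!: eval_Comp_add_recf eval_Comp_single[OF _ eval_triangle_recf])

section \<open>The interpreter program\<close>

abbreviation zero_t :: "term" where "zero_t \<equiv> Fn 0 []"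
abbreviation suc_t :: "term \<Rightarrow> term" where "suc_t t \<equiv> Fn 11 [t]"
abbreviation nil_t :: "term" where "nil_t \<equiv> Fn 2 []"
abbreviation cons_t :: "term \<Rightarrow> term \<Rightarrow> term" where "cons_t t u \<equiv> Fn 3 [t, u]"
abbreviation node_t :: "term \<Rightarrow> term \<Rightarrow> term \<Rightarrow> term" where "node_t t u v \<equiv> Fn 10 [t, u, v]"

abbreviation zero_code :: "term" where "zero_code \<equiv> Fn 4 []"
abbreviation succ_code :: "term" where "succ_code \<equiv> Fn 5 []"
abbreviation proj_code :: "term \<Rightarrow> term" where "proj_code i \<equiv> Fn 6 [i]"
abbreviation comp_code :: "term \<Rightarrow> term \<Rightarrow> term" where "comp_code f gs \<equiv> Fn 7 [f, gs]"
abbreviation prim_code :: "term \<Rightarrow> term \<Rightarrow> term" where "prim_code f g \<equiv> Fn 8 [f, g]"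
abbreviation mn_code :: "term \<Rightarrow> term" where "mn_code f \<equiv> Fn 9 [f]"

fun nat_term :: "nat \<Rightarrow> term" where
  "nat_term 0 = zero_t"
| "nat_term (Suc n) = suc_t (nat_term n)"

fun list_term :: "term list \<Rightarrow> term" where
  "list_term [] = nil_t"
| "list_term (t # ts) = cons_t t (list_term ts)"

abbreviation nats_term :: "nat list \<Rightarrow> term" where
  "nats_term xs \<equiv> list_term (map nat_term xs)"

fun recf_term :: "recf \<Rightarrow> term" where
  "recf_term Zero = zero_code"
| "recf_term Succ = succ_code"
| "recf_term (Proj i) = proj_code (nat_term i)"
| "recf_term (Comp f gs) = comp_code (recf_term f) (list_term (map recf_term gs))"
| "recf_term (Prim f g) = prim_code (recf_term f) (recf_term g)"
| "recf_term (Mn f) = mn_code (recf_term f)"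

lemma subst_term_nat_term [simp]: "subst_term \<sigma> (nat_term n) = nat_term n"
  by (induction n) simp_all

lemma subst_term_list_term [simp]: "subst_term \<sigma> (list_term ts) = list_term (map (subst_term \<sigma>) ts)"
  by (induction ts) simp_all

lemma subst_term_recf_term [simp]: "subst_term \<sigma> (recf_term f) = recf_term f"
  by (induction f) (simp_all cong: map_cong)

abbreviation eval_atom :: "term \<Rightarrow> term \<Rightarrow> term \<Rightarrow> term \<Rightarrow> atom" where
  "eval_atom f xs y w \<equiv> Atom 0 [f, xs, y, w]"
abbreviation nth_atom :: "term \<Rightarrow> term \<Rightarrow> term \<Rightarrow> atom" where
  "nth_atom i xs y \<equiv> Atom 2 [i, xs, y]"
abbreviation search_atom :: "term \<Rightarrow> term \<Rightarrow> term \<Rightarrow> term \<Rightarrow> atom" where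
  "search_atom f xs y w \<equiv> Atom 3 [f, xs, y, w]"
abbreviation input_atom :: "term \<Rightarrow> atom" where
  "input_atom x \<equiv> Atom 4 [x]"
abbreviation halt_atom :: "term \<Rightarrow> term \<Rightarrow> term \<Rightarrow> term \<Rightarrow> atom" where
  "halt_atom f xs y w \<equiv> Atom 5 [f, xs, y, w]"
abbreviation evals_atom :: "term \<Rightarrow> term \<Rightarrow> term \<Rightarrow> term \<Rightarrow> atom" where
  "evals_atom gs xs ys w \<equiv> Atom 6 [gs, xs, ys, w]"

text \<open>The last argument of eval, evals and search atoms records the intermediate values of the
  computation.  It carries no information, but it makes every argument of a body atom a subterm of
  an argument of the head.\<close>

definition interpreter_rules :: "rule list" where
  "interpreter_rules = (let
     F = Var 0; G = Var 1; XS = Var 2; Y = Var 3; Z = Var 4; W = Var 5; W1 = Var 6; W2 = Var 7;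
     N = Var 8; I = Var 9; X = Var 10; GS = Var 11; YS = Var 12; V = Var 13 in
   [Rule (eval_atom zero_code XS zero_t nil_t) [],
    Rule (eval_atom succ_code (cons_t X XS) (suc_t X) nil_t) [],
    Rule (eval_atom (proj_code I) XS V nil_t) [Pos (nth_atom I XS V)],
    Rule (nth_atom zero_t (cons_t X XS) X) [],
    Rule (nth_atom (suc_t I) (cons_t X XS) V) [Pos (nth_atom I XS V)],
    Rule (eval_atom (comp_code F GS) XS Z (node_t YS W1 W2))
      [Pos (evals_atom GS XS YS W1), Pos (eval_atom F YS Z W2)],
    Rule (evals_atom nil_t XS nil_t nil_t) [],
    Rule (evals_atom (cons_t G GS) XS (cons_t Y YS) (node_t W1 W2 nil_t))
      [Pos (eval_atom G XS Y W1), Pos (evals_atom GS XS YS W2)],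
    Rule (eval_atom (prim_code F G) (cons_t zero_t XS) Y W) [Pos (eval_atom F XS Y W)],
    Rule (eval_atom (prim_code F G) (cons_t (suc_t N) XS) Z
        (node_t (cons_t N XS) (cons_t N (cons_t Y XS)) (node_t W1 W2 nil_t)))
      [Pos (eval_atom (prim_code F G) (cons_t N XS) Y W1),
       Pos (eval_atom G (cons_t N (cons_t Y XS)) Z W2)],
    Rule (eval_atom (mn_code F) XS Y (node_t (cons_t Y XS) zero_t (node_t W1 W2 nil_t)))
      [Pos (eval_atom F (cons_t Y XS) zero_t W1), Pos (search_atom F XS Y W2)],
    Rule (search_atom F XS zero_t nil_t) [],
    Rule (search_atom F XS (suc_t N) (node_t (cons_t N XS) (suc_t V) (node_t W1 W2 nil_t)))
      [Pos (search_atom F XS N W1), Pos (eval_atom F (cons_t N XS) (suc_t V) W2)]])"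

definition halting_rule :: "recf \<Rightarrow> rule" where
  "halting_rule r = (let X = Var 10; Y = Var 3; W = Var 5;
     H = halt_atom (recf_term r) (cons_t X nil_t) Y W in
   Rule H [Pos (input_atom X), Pos (eval_atom (recf_term r) (cons_t X nil_t) Y W), Neg H])"

definition halting_program :: "recf \<Rightarrow> nat \<Rightarrow> program" where
  "halting_program r x = Rule (input_atom (nat_term x)) [] # interpreter_rules @ [halting_rule r]"

lemma denial_program_halting_program: "denial_program 5 (halting_program r x)"
  unfolding denial_program_def halting_program_def interpreter_rules_def halting_rule_def Let_def
  by auto

lemma finitely_recursive_halting_program: "finitely_recursive (halting_program r x)"
proof (rule finitely_recursive_if_body_args_subterms_of_head)
  show "body_args_subterms_of_head (halting_program r x)"
    unfolding body_args_subterms_of_head_def halting_program_def interpreter_rules_def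
      halting_rule_def Let_def
    by (simp add: subterms_refl)
qed

definition nat_term_recf :: recf where
  "nat_term_recf = Prim (const_recf (enc_term zero_t))
     (pair_recf (const_recf 1) (pair_recf (const_recf 11) (Comp Succ [pair_recf (Proj 1) (const_recf 0)])))"

lemma eval_nat_term_recf: "eval nat_term_recf [n] (enc_term (nat_term n))"
proof (induction n)
  case 0
  show ?case unfolding nat_term_recf_def by (auto intro: eval_Prim0 eval_const_recf)
next
  case (Suc n)
  have "eval (Proj 1) [n, enc_term (nat_term n)] (enc_term (nat_term n))"
    by (rule eval_Proj_nth) simp_all
  then have "eval (pair_recf (const_recf 1) (pair_recf (const_recf 11)
      (Comp Succ [pair_recf (Proj 1) (const_recf 0)]))) [n, enc_term (nat_term n)] (enc_term (nat_term (Suc n)))"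
    by (auto intro!: eval_pair_recf eval_const_recf eval_Comp_Succ eval_Zero)
  with Suc show ?case unfolding nat_term_recf_def by (auto intro: eval_PrimS)
qed

lemma computable_halting_instance: "computable (\<lambda>x. enc_instance (halting_program r x, FFalse))"
proof -
  \<comment> \<open>Only the input fact depends on x; its code is
    prod_encode (prod_encode (4, Suc (prod_encode (enc_term (nat_term x), 0))), 0).\<close>
  define K where "K = list_encode (map enc_rule (interpreter_rules @ [halting_rule r]))"
  define R where "R = pair_recf
    (Comp Succ [pair_recf (pair_recf (pair_recf (const_recf 4) (Comp Succ [pair_recf nat_term_recf (const_recf 0)]))
      (const_recf 0)) (const_recf K)])
    (const_recf (enc_fmla FFalse))"
  have "eval R [x] (enc_instance (halting_program r x, FFalse))" for x
    unfolding R_def enc_instance_def halting_program_def enc_program_def K_def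
    by (auto intro!: eval_pair_recf eval_const_recf eval_Comp_Succ eval_nat_term_recf eval_Zero)
  then show ?thesis unfolding computable_def by blast
qed

abbreviation HU :: "recf \<Rightarrow> nat \<Rightarrow> term set" where
  "HU r x \<equiv> herbrand_universe (halting_program r x)"

lemma signature_halting_program:
  "{(0, 0), (11, 1), (2, 0), (3, 2), (10, 3), (4, 0), (5, 0), (6, 1), (7, 2), (8, 2), (9, 1)}
    \<subseteq> signature (halting_program r x)"
proof
  fix fn :: "nat \<times> nat"
  assume "fn \<in> {(0, 0), (11, 1), (2, 0), (3, 2), (10, 3), (4, 0), (5, 0), (6, 1), (7, 2), (8, 2), (9, 1)}"
  moreover have "{(0, 0), (11, 1), (2, 0), (3, 2), (10, 3), (4, 0), (5, 0), (6, 1), (7, 2), (8, 2), (9, 1)}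
      \<subseteq> (\<Union>ru\<in>set interpreter_rules. rule_funs ru)"
    unfolding interpreter_rules_def Let_def by simp
  ultimately obtain ru where "ru \<in> set interpreter_rules" "fn \<in> rule_funs ru"
    by blast
  moreover from this have "ru \<in> set (halting_program r x)"
    by (simp add: halting_program_def)
  ultimately show "fn \<in> signature (halting_program r x)"
    by (blast intro: signature_if_rule_funs)
qed

lemma herbrand_universe_halting_program_iff [simp]:
  "zero_t \<in> HU r x"
  "nil_t \<in> HU r x"
  "zero_code \<in> HU r x"
  "succ_code \<in> HU r x"
  "suc_t t \<in> HU r x \<longleftrightarrow> t \<in> HU r x"
  "proj_code t \<in> HU r x \<longleftrightarrow> t \<in> HU r x"
  "mn_code t \<in> HU r x \<longleftrightarrow> t \<in> HU r x"
  "cons_t t u \<in> HU r x \<longleftrightarrow>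
    t \<in> HU r x \<and> u \<in> HU r x"
  "comp_code t u \<in> HU r x \<longleftrightarrow>
    t \<in> HU r x \<and> u \<in> HU r x"
  "prim_code t u \<in> HU r x \<longleftrightarrow>
    t \<in> HU r x \<and> u \<in> HU r x"
  "node_t t u v \<in> HU r x \<longleftrightarrow> t \<in> HU r x
    \<and> u \<in> HU r x \<and> v \<in> HU r x"
  using signature_halting_program[of r x]
  by (simp_all add: herbrand_universe_Fn_iff insert_subset numeral_eq_Suc)

lemma nat_term_in_herbrand_universe: "nat_term n \<in> HU r x"
  by (induction n) simp_all

lemma list_term_in_herbrand_universe:
  "\<forall>t\<in>set ts. t \<in> HU r x \<Longrightarrow> list_term ts \<in> HU r x"
  by (induction ts) simp_all

lemma recf_term_in_herbrand_universe: "recf_term f \<in> HU r x"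
  by (induction f) (auto intro!: list_term_in_herbrand_universe simp: nat_term_in_herbrand_universe)

lemma nats_term_in_herbrand_universe: "nats_term xs \<in> HU r x"
  by (rule list_term_in_herbrand_universe) (simp add: nat_term_in_herbrand_universe)

section \<open>Completeness of the interpreter\<close>

abbreviation derivable :: "recf \<Rightarrow> nat \<Rightarrow> atom \<Rightarrow> bool" where
  "derivable r x a \<equiv> a \<in> least_model (reduct (halting_program r x) {})"

lemma derivable_args_in_HU: "derivable r x (Atom p ts) \<Longrightarrow> \<forall>t\<in>set ts. t \<in> HU r x"
  using args_in_herbrand_universe by fastforce

lemma derivable_by_interpreter_rule:
  assumes "k < length interpreter_rules" "\<forall>v. \<sigma> v \<in> HU r x"
    "\<forall>b. Pos b \<in> set (body (interpreter_rules ! k)) \<longrightarrow> derivable r x (subst_atom \<sigma> b)"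
  shows "derivable r x (subst_atom \<sigma> (head (interpreter_rules ! k)))"
proof (rule subst_head_in_least_model)
  show "interpreter_rules ! k \<in> set (halting_program r x)"
    using assms(1) by (simp add: halting_program_def)
qed (use assms in auto)

lemma derivable_eval_Zero: "xs \<in> HU r x \<Longrightarrow> derivable r x (eval_atom zero_code xs zero_t nil_t)"
  using derivable_by_interpreter_rule[of 0 "(\<lambda>_. zero_t)(2 := xs)" r x]
  by (simp add: interpreter_rules_def Let_def)

lemma derivable_eval_Succ:
  "t \<in> HU r x \<Longrightarrow> xs \<in> HU r x \<Longrightarrow> derivable r x (eval_atom succ_code (cons_t t xs) (suc_t t) nil_t)"
  using derivable_by_interpreter_rule[of 1 "(\<lambda>_. zero_t)(2 := xs, 10 := t)" r x]
  by (simp add: interpreter_rules_def Let_def)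

lemma derivable_eval_Proj:
  assumes "derivable r x (nth_atom i xs v)"
  shows "derivable r x (eval_atom (proj_code i) xs v nil_t)"
  using derivable_by_interpreter_rule[of 2 "(\<lambda>_. zero_t)(2 := xs, 9 := i, 13 := v)" r x]
    assms derivable_args_in_HU[OF assms]
  by (simp add: interpreter_rules_def Let_def)

lemma derivable_nth_0:
  "t \<in> HU r x \<Longrightarrow> xs \<in> HU r x \<Longrightarrow> derivable r x (nth_atom zero_t (cons_t t xs) t)"
  using derivable_by_interpreter_rule[of 3 "(\<lambda>_. zero_t)(2 := xs, 10 := t)" r x]
  by (simp add: interpreter_rules_def Let_def)

lemma derivable_nth_Suc:
  assumes "t \<in> HU r x" "derivable r x (nth_atom i xs v)"
  shows "derivable r x (nth_atom (suc_t i) (cons_t t xs) v)"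
  using derivable_by_interpreter_rule[of 4 "(\<lambda>_. zero_t)(2 := xs, 9 := i, 10 := t, 13 := v)" r x]
    assms derivable_args_in_HU[OF assms(2)]
  by (simp add: interpreter_rules_def Let_def)

lemma derivable_eval_Comp:
  assumes "derivable r x (evals_atom gs xs ys w1)" "derivable r x (eval_atom f ys z w2)"
  shows "derivable r x (eval_atom (comp_code f gs) xs z (node_t ys w1 w2))"
  using derivable_by_interpreter_rule[of 5 "(\<lambda>_. zero_t)(0 := f, 2 := xs, 4 := z, 6 := w1, 7 := w2,
      11 := gs, 12 := ys)" r x]
    assms derivable_args_in_HU[OF assms(1)] derivable_args_in_HU[OF assms(2)]
  by (simp add: interpreter_rules_def Let_def)

lemma derivable_evals_Nil: "xs \<in> HU r x \<Longrightarrow> derivable r x (evals_atom nil_t xs nil_t nil_t)"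
  using derivable_by_interpreter_rule[of 6 "(\<lambda>_. zero_t)(2 := xs)" r x]
  by (simp add: interpreter_rules_def Let_def)

lemma derivable_evals_Cons:
  assumes "derivable r x (eval_atom g xs y w1)" "derivable r x (evals_atom gs xs ys w2)"
  shows "derivable r x (evals_atom (cons_t g gs) xs (cons_t y ys) (node_t w1 w2 nil_t))"
  using derivable_by_interpreter_rule[of 7 "(\<lambda>_. zero_t)(1 := g, 2 := xs, 3 := y, 6 := w1, 7 := w2,
      11 := gs, 12 := ys)" r x]
    assms derivable_args_in_HU[OF assms(1)] derivable_args_in_HU[OF assms(2)]
  by (simp add: interpreter_rules_def Let_def)

lemma derivable_eval_Prim0:
  assumes "g \<in> HU r x" "derivable r x (eval_atom f xs y w)"
  shows "derivable r x (eval_atom (prim_code f g) (cons_t zero_t xs) y w)"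
  using derivable_by_interpreter_rule[of 8 "(\<lambda>_. zero_t)(0 := f, 1 := g, 2 := xs, 3 := y, 5 := w)" r x]
    assms derivable_args_in_HU[OF assms(2)]
  by (simp add: interpreter_rules_def Let_def)

lemma derivable_eval_PrimS:
  assumes "derivable r x (eval_atom (prim_code f g) (cons_t n xs) y w1)"
    and "derivable r x (eval_atom g (cons_t n (cons_t y xs)) z w2)"
  shows "derivable r x (eval_atom (prim_code f g) (cons_t (suc_t n) xs) z
    (node_t (cons_t n xs) (cons_t n (cons_t y xs)) (node_t w1 w2 nil_t)))"
  using derivable_by_interpreter_rule[of 9 "(\<lambda>_. zero_t)(0 := f, 1 := g, 2 := xs, 3 := y, 4 := z,
      6 := w1, 7 := w2, 8 := n)" r x]
    assms derivable_args_in_HU[OF assms(1)] derivable_args_in_HU[OF assms(2)]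
  by (simp add: interpreter_rules_def Let_def)

lemma derivable_eval_Mn:
  assumes "derivable r x (eval_atom f (cons_t y xs) zero_t w1)" "derivable r x (search_atom f xs y w2)"
  shows "derivable r x (eval_atom (mn_code f) xs y (node_t (cons_t y xs) zero_t (node_t w1 w2 nil_t)))"
  using derivable_by_interpreter_rule[of 10 "(\<lambda>_. zero_t)(0 := f, 2 := xs, 3 := y, 6 := w1, 7 := w2)" r x]
    assms derivable_args_in_HU[OF assms(1)] derivable_args_in_HU[OF assms(2)]
  by (simp add: interpreter_rules_def Let_def)

lemma derivable_search_0:
  "f \<in> HU r x \<Longrightarrow> xs \<in> HU r x \<Longrightarrow> derivable r x (search_atom f xs zero_t nil_t)"
  using derivable_by_interpreter_rule[of 11 "(\<lambda>_. zero_t)(0 := f, 2 := xs)" r x]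
  by (simp add: interpreter_rules_def Let_def)

lemma derivable_search_Suc:
  assumes "derivable r x (search_atom f xs n w1)" "derivable r x (eval_atom f (cons_t n xs) (suc_t v) w2)"
  shows "derivable r x (search_atom f xs (suc_t n) (node_t (cons_t n xs) (suc_t v) (node_t w1 w2 nil_t)))"
  using derivable_by_interpreter_rule[of 12 "(\<lambda>_. zero_t)(0 := f, 2 := xs, 6 := w1, 7 := w2, 8 := n, 13 := v)" r x]
    assms derivable_args_in_HU[OF assms(1)] derivable_args_in_HU[OF assms(2)]
  by (simp add: interpreter_rules_def Let_def)

lemma derivable_nth: "i < length xs \<Longrightarrow> derivable r x (nth_atom (nat_term i) (nats_term xs) (nat_term (xs ! i)))"
proof (induction xs arbitrary: i)
  case Nil
  then show ?case by simp
next
  case (Cons a xs)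
  then show ?case
    by (cases i) (auto intro: derivable_nth_0 derivable_nth_Suc
        simp: nat_term_in_herbrand_universe nats_term_in_herbrand_universe)
qed

lemma derivable_evals:
  "list_all2 (\<lambda>g y. \<exists>w. derivable r x (eval_atom (recf_term g) (nats_term xs) (nat_term y) w)) gs ys
    \<Longrightarrow> \<exists>w. derivable r x (evals_atom (list_term (map recf_term gs)) (nats_term xs) (nats_term ys) w)"
proof (induction rule: list_all2_induct)
  case Nil
  then show ?case by (auto intro: derivable_evals_Nil nats_term_in_herbrand_universe)
next
  case (Cons g gs y ys)
  then show ?case by (auto intro: derivable_evals_Cons)
qed

lemma derivable_search:
  "\<forall>z<y. \<exists>v. 0 < v \<and> (\<exists>w. derivable r x (eval_atom (recf_term f) (nats_term (z # xs)) (nat_term v) w))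
    \<Longrightarrow> \<exists>w. derivable r x (search_atom (recf_term f) (nats_term xs) (nat_term y) w)"
proof (induction y)
  case 0
  then show ?case
    by (auto intro: derivable_search_0 recf_term_in_herbrand_universe nats_term_in_herbrand_universe)
next
  case (Suc y)
  then obtain w1 where "derivable r x (search_atom (recf_term f) (nats_term xs) (nat_term y) w1)"
    by auto
  moreover obtain v w2 where "derivable r x (eval_atom (recf_term f) (nats_term (y # xs)) (nat_term (Suc v)) w2)"
    using Suc.prems gr0_implies_Suc by (metis lessI)
  ultimately show ?case
    by (auto intro: derivable_search_Suc)
qed

lemma derivable_if_eval:
  "eval f xs y \<Longrightarrow> \<exists>w. derivable r x (eval_atom (recf_term f) (nats_term xs) (nat_term y) w)"
proof (induction rule: eval.induct)
  case (eval_Zero xs)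
  then show ?case by (auto intro: derivable_eval_Zero nats_term_in_herbrand_universe)
next
  case (eval_Succ a xs)
  then show ?case
    by (auto intro: derivable_eval_Succ nat_term_in_herbrand_universe nats_term_in_herbrand_universe)
next
  case (eval_Proj i xs)
  then show ?case by (auto intro: derivable_eval_Proj derivable_nth)
next
  case (eval_Comp xs gs ys f z)
  have "list_all2 (\<lambda>g y. \<exists>w. derivable r x (eval_atom (recf_term g) (nats_term xs) (nat_term y) w)) gs ys"
    using eval_Comp.IH(1) by (rule list_all2_mono) blast
  then obtain w1 where "derivable r x (evals_atom (list_term (map recf_term gs)) (nats_term xs) (nats_term ys) w1)"
    using derivable_evals by blast
  with eval_Comp.IH show ?case by (auto intro: derivable_eval_Comp)
next
  case (eval_Prim0 f xs y g)
  then show ?case by (auto intro: derivable_eval_Prim0 recf_term_in_herbrand_universe)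
next
  case (eval_PrimS f g n xs y z)
  from eval_PrimS.IH(1) obtain w1 where
    "derivable r x (eval_atom (recf_term (Prim f g)) (nats_term (n # xs)) (nat_term y) w1)" ..
  moreover from eval_PrimS.IH(2) obtain w2 where
    "derivable r x (eval_atom (recf_term g) (nats_term (n # y # xs)) (nat_term z) w2)" ..
  ultimately show ?case
    by (auto intro: derivable_eval_PrimS)
next
  case (eval_Mn f y xs)
  have "\<forall>z<y. \<exists>v. 0 < v \<and> (\<exists>w. derivable r x (eval_atom (recf_term f) (nats_term (z # xs)) (nat_term v) w))"
    using eval_Mn.IH(2) by blast
  then obtain w2 where "derivable r x (search_atom (recf_term f) (nats_term xs) (nat_term y) w2)"
    by (blast dest: derivable_search)
  moreover from eval_Mn.IH(1) obtain w1 where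
    "derivable r x (eval_atom (recf_term f) (nats_term (y # xs)) (nat_term 0) w1)" ..
  ultimately show ?case
    by (auto dest: derivable_eval_Mn)
qed

section \<open>Soundness of the interpreter\<close>

lemma nat_term_eq_iff: "nat_term m = nat_term n \<longleftrightarrow> m = n"
proof (induction m arbitrary: n)
  case 0
  then show ?case by (cases n) auto
next
  case (Suc m)
  then show ?case by (cases n) auto
qed

lemma list_term_map_eq_iff:
  "\<forall>a\<in>set xs. \<forall>b. h a = h b \<longrightarrow> a = b \<Longrightarrow> list_term (map h xs) = list_term (map h ys) \<longleftrightarrow> xs = ys"
proof (induction xs arbitrary: ys)
  case Nil
  then show ?case by (cases ys) auto
next
  case (Cons a xs)
  then show ?case by (cases ys) auto
qed

lemma recf_term_eq_iff: "recf_term f = recf_term g \<longleftrightarrow> f = g"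
proof (induction f arbitrary: g)
  case (Comp f fs)
  then show ?case by (cases g) (auto simp: list_term_map_eq_iff)
qed (case_tac g; auto simp: nat_term_eq_iff)+

lemma nats_term_eq_iff: "nats_term xs = nats_term ys \<longleftrightarrow> xs = ys"
  by (simp add: list_term_map_eq_iff nat_term_eq_iff)

lemma recfs_term_eq_iff: "list_term (map recf_term fs) = list_term (map recf_term gs) \<longleftrightarrow> fs = gs"
  by (simp add: list_term_map_eq_iff recf_term_eq_iff)

lemma Fn_eq_nat_term_iff:
  "zero_t = nat_term n \<longleftrightarrow> n = 0"
  "suc_t t = nat_term n \<longleftrightarrow> (\<exists>m. n = Suc m \<and> t = nat_term m)"
  by (cases n; auto)+

lemma Fn_eq_list_term_iff:
  "nil_t = list_term (map h xs) \<longleftrightarrow> xs = []"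
  "cons_t t u = list_term (map h xs) \<longleftrightarrow> (\<exists>y ys. xs = y # ys \<and> t = h y \<and> u = list_term (map h ys))"
  by (cases xs; auto)+

lemma Fn_eq_recf_term_iff:
  "zero_code = recf_term f \<longleftrightarrow> f = Zero"
  "succ_code = recf_term f \<longleftrightarrow> f = Succ"
  "proj_code t = recf_term f \<longleftrightarrow> (\<exists>i. f = Proj i \<and> t = nat_term i)"
  "comp_code t u = recf_term f \<longleftrightarrow> (\<exists>g gs. f = Comp g gs \<and> t = recf_term g \<and> u = list_term (map recf_term gs))"
  "prim_code t u = recf_term f \<longleftrightarrow> (\<exists>g h. f = Prim g h \<and> t = recf_term g \<and> u = recf_term h)"
  "mn_code t = recf_term f \<longleftrightarrow> (\<exists>g. f = Mn g \<and> t = recf_term g)"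
  by (cases f; auto)+

lemmas term_decoding_simps = nat_term_eq_iff nats_term_eq_iff recf_term_eq_iff recfs_term_eq_iff
  Fn_eq_nat_term_iff Fn_eq_list_term_iff Fn_eq_recf_term_iff

text \<open>The soundness invariant: the meaning of an atom whose arguments are codes of functions and
  numbers.\<close>

definition intended :: "recf \<Rightarrow> nat \<Rightarrow> atom \<Rightarrow> bool" where
  "intended r x a \<longleftrightarrow>
    (\<forall>f xs y w. a = eval_atom f xs y w \<longrightarrow> (\<forall>g zs. f = recf_term g \<longrightarrow> xs = nats_term zs \<longrightarrow>
       (\<exists>v. y = nat_term v \<and> eval g zs v))) \<and>
    (\<forall>gs xs ys w. a = evals_atom gs xs ys w \<longrightarrow> (\<forall>hs zs. gs = list_term (map recf_term hs) \<longrightarrow>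
       xs = nats_term zs \<longrightarrow> (\<exists>vs. ys = nats_term vs \<and> list_all2 (\<lambda>h v. eval h zs v) hs vs))) \<and>
    (\<forall>i xs y. a = nth_atom i xs y \<longrightarrow> (\<forall>j zs. i = nat_term j \<longrightarrow> xs = nats_term zs \<longrightarrow>
       j < length zs \<and> y = nat_term (zs ! j))) \<and>
    (\<forall>f xs y w. a = search_atom f xs y w \<longrightarrow> (\<forall>g zs. f = recf_term g \<longrightarrow> xs = nats_term zs \<longrightarrow>
       (\<exists>n. y = nat_term n \<and> (\<forall>z<n. \<exists>v. eval g (z # zs) v \<and> 0 < v)))) \<and>
    (\<forall>t. a = input_atom t \<longrightarrow> t = nat_term x) \<and>
    (pred_of a = 5 \<longrightarrow> (\<exists>v. eval r [x] v))"

lemma intended_simps: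
  "intended r x (eval_atom f xs y w) \<longleftrightarrow> (\<forall>g zs. f = recf_term g \<longrightarrow> xs = nats_term zs \<longrightarrow>
     (\<exists>v. y = nat_term v \<and> eval g zs v))"
  "intended r x (evals_atom gs xs ys w) \<longleftrightarrow> (\<forall>hs zs. gs = list_term (map recf_term hs) \<longrightarrow>
     xs = nats_term zs \<longrightarrow> (\<exists>vs. ys = nats_term vs \<and> list_all2 (\<lambda>h v. eval h zs v) hs vs))"
  "intended r x (nth_atom i xs y) \<longleftrightarrow> (\<forall>j zs. i = nat_term j \<longrightarrow> xs = nats_term zs \<longrightarrow>
     j < length zs \<and> y = nat_term (zs ! j))"
  "intended r x (search_atom f xs y w) \<longleftrightarrow> (\<forall>g zs. f = recf_term g \<longrightarrow> xs = nats_term zs \<longrightarrow>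
     (\<exists>n. y = nat_term n \<and> (\<forall>z<n. \<exists>v. eval g (z # zs) v \<and> 0 < v)))"
  "intended r x (input_atom t) \<longleftrightarrow> t = nat_term x"
  "intended r x (halt_atom f xs y w) \<longleftrightarrow> (\<exists>v. eval r [x] v)"
  unfolding intended_def by simp_all

lemma intended_eval_Mn:
  assumes "intended r x (eval_atom f (cons_t y xs) zero_t w1)" "intended r x (search_atom f xs y w2)"
  shows "intended r x (eval_atom (mn_code f) xs y w)"
  unfolding intended_simps
proof (intro allI impI)
  fix g zs assume "mn_code f = recf_term g" "xs = nats_term zs"
  then obtain h where h: "g = Mn h" "f = recf_term h" by (auto simp: Fn_eq_recf_term_iff)
  from assms(2) h \<open>xs = nats_term zs\<close> obtain n where n: "y = nat_term n" "\<forall>z<n. \<exists>v. eval h (z # zs) v \<and> 0 < v"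
    unfolding intended_simps by blast
  from assms(1) h \<open>xs = nats_term zs\<close> n have "eval h (n # zs) 0"
    unfolding intended_simps by (auto simp: Fn_eq_nat_term_iff)
  then show "\<exists>v. y = nat_term v \<and> eval g zs v"
    using n h by (auto intro: eval_Mn)
qed

lemma intended_search_Suc:
  assumes "intended r x (search_atom f xs n w1)" "intended r x (eval_atom f (cons_t n xs) (suc_t v) w2)"
  shows "intended r x (search_atom f xs (suc_t n) w)"
  unfolding intended_simps
proof (intro allI impI)
  fix g zs assume g: "f = recf_term g" "xs = nats_term zs"
  with assms(1) obtain m where m: "n = nat_term m" "\<forall>z<m. \<exists>v. eval g (z # zs) v \<and> 0 < v"
    unfolding intended_simps by blast
  with assms(2) g obtain u where "eval g (m # zs) u" "0 < u"
    unfolding intended_simps by (fastforce simp: term_decoding_simps)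
  with m have "\<forall>z<Suc m. \<exists>v. eval g (z # zs) v \<and> 0 < v"
    using less_Suc_eq by auto
  with m show "\<exists>k. suc_t n = nat_term k \<and> (\<forall>z<k. \<exists>v. eval g (z # zs) v \<and> 0 < v)"
    by (intro exI[of _ "Suc m"]) simp
qed

lemma intended_evals_Cons:
  assumes "intended r x (eval_atom g xs y w1)" "intended r x (evals_atom gs xs ys w2)"
  shows "intended r x (evals_atom (cons_t g gs) xs (cons_t y ys) w)"
  unfolding intended_simps
proof (intro allI impI)
  fix hs zs assume hs: "cons_t g gs = list_term (map recf_term hs)" and zs: "xs = nats_term zs"
  then obtain h hs' where h: "hs = h # hs'" "g = recf_term h" "gs = list_term (map recf_term hs')"
    by (auto simp: Fn_eq_list_term_iff)
  obtain v where "y = nat_term v" "eval h zs v"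
    using assms(1) h(2) zs unfolding intended_simps by blast
  moreover obtain vs where "ys = nats_term vs" "list_all2 (\<lambda>h v. eval h zs v) hs' vs"
    using assms(2) h(3) zs unfolding intended_simps by blast
  ultimately show "\<exists>vs. cons_t y ys = nats_term vs \<and> list_all2 (\<lambda>h v. eval h zs v) hs vs"
    using h(1) by (intro exI[of _ "v # vs"]) simp
qed

lemma intended_eval_PrimS:
  assumes "intended r x (eval_atom (prim_code f g) (cons_t n xs) y w1)"
    "intended r x (eval_atom g (cons_t n (cons_t y xs)) z w2)"
  shows "intended r x (eval_atom (prim_code f g) (cons_t (suc_t n) xs) z w)"
  unfolding intended_simps
proof (intro allI impI)
  fix h zs assume h: "prim_code f g = recf_term h" and zs: "cons_t (suc_t n) xs = nats_term zs"
  then obtain f' g' where fg: "h = Prim f' g'" "f = recf_term f'" "g = recf_term g'"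
    by (auto simp: Fn_eq_recf_term_iff)
  from zs obtain m zs' where m: "zs = Suc m # zs'" "n = nat_term m" "xs = nats_term zs'"
    by (auto simp: Fn_eq_list_term_iff Fn_eq_nat_term_iff)
  have "\<exists>u. y = nat_term u \<and> eval h (m # zs') u"
    using assms(1) h m(2,3) unfolding intended_simps by simp
  then obtain u where u: "y = nat_term u" "eval (Prim f' g') (m # zs') u"
    using fg(1) by blast
  have "\<exists>v. z = nat_term v \<and> eval g' (m # u # zs') v"
    using assms(2) fg(3) m(2,3) u(1) unfolding intended_simps by simp
  then obtain v where "z = nat_term v" "eval g' (m # u # zs') v"
    by blast
  then show "\<exists>v. z = nat_term v \<and> eval h zs v"
    using u(2) fg(1) m(1) by (auto intro: eval_PrimS)
qed

lemma intended_interpreter_rule: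
  assumes "ru \<in> set interpreter_rules"
    and "\<forall>b. Pos b \<in> set (body ru) \<longrightarrow> intended r x (subst_atom \<sigma> b)"
  shows "intended r x (subst_atom \<sigma> (head ru))"
proof -
  have "length interpreter_rules = 13"
    by (simp add: interpreter_rules_def Let_def)
  then obtain k where k: "k < 13" "ru = interpreter_rules ! k"
    using assms(1) by (metis in_set_conv_nth)
  have "k = 0 \<or> k = 1 \<or> k = 2 \<or> k = 3 \<or> k = 4 \<or> k = 5 \<or> k = 6 \<or> k = 7 \<or> k = 8 \<or> k = 9
    \<or> k = 10 \<or> k = 11 \<or> k = 12"
    using k(1) by arith
  then consider (recursive) "k \<in> {7, 9, 10, 12}" | (direct) "k \<in> {0, 1, 2, 3, 4, 5, 6, 8, 11}"
    by auto
  then show ?thesis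
  proof cases
    case recursive
    then show ?thesis
      using assms(2) unfolding k(2)
      by (auto simp: interpreter_rules_def Let_def all_conj_distrib
          intro: intended_evals_Cons intended_eval_PrimS intended_eval_Mn intended_search_Suc)
  next
    case direct
    then show ?thesis
      using assms(2) unfolding k(2)
      by (auto simp: interpreter_rules_def Let_def intended_simps term_decoding_simps; metis eval.intros)
  qed
qed

lemma intended_if_derivable: "derivable r x a \<Longrightarrow> intended r x a"
proof (induction rule: least_model_reduct_induct)
  case (rule \<sigma> ru)
  then consider "ru = Rule (input_atom (nat_term x)) []" | "ru \<in> set interpreter_rules" | "ru = halting_rule r"
    by (auto simp: halting_program_def)
  then show ?case
  proof cases
    case 1
    then show ?thesis by (simp add: intended_simps)
  next
    case 2
    then show ?thesis using rule(3) by (blast intro: intended_interpreter_rule)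
  next
    case 3
    then have "intended r x (input_atom (\<sigma> 10))"
      and "intended r x (eval_atom (recf_term r) (cons_t (\<sigma> 10) nil_t) (\<sigma> 3) (\<sigma> 5))"
      using rule(3)[of "input_atom (Var 10)"] rule(3)[of "eval_atom (recf_term r) (cons_t (Var 10) nil_t) (Var 3) (Var 5)"]
      by (simp_all add: halting_rule_def Let_def)
    then have "\<exists>v. eval r [x] v"
      unfolding intended_simps by (metis list.simps(8,9) list_term.simps)
    with 3 show ?thesis
      by (simp add: halting_rule_def Let_def intended_simps)
  qed
qed

lemma derivable_halt_atom_iff: "(\<exists>a. derivable r x a \<and> pred_of a = 5) \<longleftrightarrow> (\<exists>y. eval r [x] y)"
proof
  assume "\<exists>a. derivable r x a \<and> pred_of a = 5"
  then show "\<exists>y. eval r [x] y"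
    using intended_if_derivable unfolding intended_def by blast
next
  assume "\<exists>y. eval r [x] y"
  then obtain y w where w: "derivable r x (eval_atom (recf_term r) (nats_term [x]) (nat_term y) w)"
    using derivable_if_eval by blast
  have "Rule (input_atom (nat_term x)) [] \<in> set (halting_program r x)"
    by (simp add: halting_program_def)
  from subst_head_in_least_model[OF this, of "\<lambda>_. zero_t" "{}"]
  have input: "derivable r x (input_atom (nat_term x))"
    by simp
  have "halting_rule r \<in> set (halting_program r x)"
    by (simp add: halting_program_def)
  from subst_head_in_least_model[OF this, of "(\<lambda>_. zero_t)(10 := nat_term x, 3 := nat_term y, 5 := w)" "{}"]
  have "derivable r x (halt_atom (recf_term r) (cons_t (nat_term x) nil_t) (nat_term y) w)"
    using input w derivable_args_in_HU[OF w]
    by (simp add: halting_rule_def Let_def nat_term_in_herbrand_universe)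
  then show "\<exists>a. derivable r x a \<and> pred_of a = 5"
    by fastforce
qed

lemma skeptically_entails_halting_program_iff:
  "skeptically_entails (halting_program r x) FFalse \<longleftrightarrow> (\<exists>y. eval r [x] y)"
  using skeptically_entails_FFalse_denial_program[OF denial_program_halting_program] derivable_halt_atom_iff
  by blast

theorem theorem5p5:
  shows "\<forall>A. rec_enum A \<longrightarrow> many_one_reducible A SkepFR"
proof (intro allI impI)
  fix A assume "rec_enum A"
  then obtain r where r: "\<forall>x. x \<in> A \<longleftrightarrow> (\<exists>y. eval r [x] y)"
    unfolding rec_enum_def by blast
  have "x \<in> A \<longleftrightarrow> (halting_program r x, FFalse) \<in> SkepFR" for x
    using r finitely_recursive_halting_program skeptically_entails_halting_program_iff
    unfolding SkepFR_def ground_fmla_def by simp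
  with computable_halting_instance[of r] show "many_one_reducible A SkepFR"
    unfolding many_one_reducible_def by (intro exI[of _ "\<lambda>x. (halting_program r x, FFalse)"]) (simp add: comp_def)
qed

end
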